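(* Let $\mathfrak{B}_i=\ker R_i\left(\frac{d}{dt}\right)$, $i=1,2$, where $R_1,R_2\in\mathbb{R}^{\tt w\times\tt w}[\xi]$ are nonsingular and $R_2R_1^{-1}$ is strictly proper. Let $n_i:=\deg(\det(R_i))$, $i=1,2$. Then $n_2<n_1$. Moreover, there exist $X_1^\prime\in\mathbb{R}^{(n_1-n_2)\times\tt w}[\xi]$ and $X_2\in\mathbb{R}^{n_2\times\tt w}[\xi]$ such that $X_2\left(\frac{d}{dt}\right)$ is a minimal state map for $\mathfrak{B}_2$ and $X_1\left(\frac{d}{dt}\right):=\mathrm{col}\left(X_2\left(\frac{d}{dt}\right),X_1^\prime\left(\frac{d}{dt}\right)\right)$ is a minimal state map for $\mathfrak{B}_1$. Finally, there exists a constant matrix $\Pi\in\mathbb{R}^{(n_1-n_2)\times n_2}$ such that $X_1^\prime(\xi)\ \mathrm{mod}\ R_2=\Pi X_2(\xi)$.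
   Context: $\ker R\left(\frac{d}{dt}\right)$ denotes the set of $\mathfrak{C}^\infty(\mathbb{R},\mathbb{R}^{\tt w})$ solutions $w$ of $R\left(\frac{d}{dt}\right)w=0$; with $R$ square nonsingular this is an autonomous linear differential behaviour. For nonsingular $R\in\mathbb{R}^{\tt w\times\tt w}[\xi]$, the state space of $\ker R\left(\frac{d}{dt}\right)$ is the finite-dimensional real vector space $\mathfrak{X}(R):=\{f\in\mathbb{R}^{1\times\tt w}[\xi]\mid fR^{-1}\text{ is strictly proper}\}$, of dimension $\deg(\det(R))$; a (minimal) state map is obtained by stacking a set of generators (a basis) of $\mathfrak{X}(R)$ as rows of a polynomial matrix $X$ and applying $X\left(\frac{d}{dt}\right)$. For $f\in\mathbb{R}^{1\times\tt w}[\xi]$, writing uniquely $fR^{-1}=s+n$ with $s$ strictly proper rational and $n$ polynomial, the canonical representative of $f$ modulo $R$ is $f\ \mathrm{mod}\ R:=sR$ (extended row-wise to polynomial matrices). *)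

theory Defs
  imports "HOL-Computational_Algebra.Polynomial" "HOL-Computational_Algebra.Fraction_Field"
    "Jordan_Normal_Form.Determinant"
begin

(* Polynomial matrices R in R^{w x w}[xi] are "real poly mat"; row vectors in
   R^{1 x w}[xi] are "real poly vec" of dimension w. *)

definition lift_rat :: "real poly \<Rightarrow> real poly fract" where
  "lift_rat p = Fract p 1"

definition lift_mat :: "real poly mat \<Rightarrow> real poly fract mat" where
  "lift_mat R = map_mat lift_rat R"

definition lift_vec :: "real poly vec \<Rightarrow> real poly fract vec" where
  "lift_vec f = map_vec lift_rat f"

definition nonsingular :: "real poly mat \<Rightarrow> bool" where
  "nonsingular R \<longleftrightarrow> square_mat R \<and> det R \<noteq> 0"

definition rat_inverse :: "real poly mat \<Rightarrow> real poly fract mat" where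
  "rat_inverse R = inverse (det (lift_mat R)) \<cdot>\<^sub>m adj_mat (lift_mat R)"

definition strictly_proper :: "real poly fract \<Rightarrow> bool" where
  "strictly_proper x \<longleftrightarrow> x = 0 \<or>
     (\<exists>p q. q \<noteq> 0 \<and> x = Fract p q \<and> degree p < degree q)"

definition strictly_proper_mat :: "real poly fract mat \<Rightarrow> bool" where
  "strictly_proper_mat M \<longleftrightarrow>
     (\<forall>i < dim_row M. \<forall>j < dim_col M. strictly_proper (M $$ (i,j)))"

definition strictly_proper_vec :: "real poly fract vec \<Rightarrow> bool" where
  "strictly_proper_vec v \<longleftrightarrow> (\<forall>j < dim_vec v. strictly_proper (v $ j))"

(* row vector times matrix  v M  is written  transpose_mat M *v v *)
definition state_space :: "real poly mat \<Rightarrow> real poly vec set" where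
  "state_space R = {f. dim_vec f = dim_row R \<and>
      strictly_proper_vec (transpose_mat (rat_inverse R) *\<^sub>v lift_vec f)}"

definition row_comb :: "(nat \<Rightarrow> real) \<Rightarrow> real poly mat \<Rightarrow> real poly vec" where
  "row_comb c X = vec (dim_col X) (\<lambda>j. \<Sum>i<dim_row X. smult (c i) (X $$ (i,j)))"

definition rows_basis_of :: "real poly mat \<Rightarrow> real poly vec set \<Rightarrow> bool" where
  "rows_basis_of X V \<longleftrightarrow>
     (\<forall>i < dim_row X. row X i \<in> V) \<and>
     (\<forall>c. row_comb c X = 0\<^sub>v (dim_col X) \<longrightarrow> (\<forall>i < dim_row X. c i = 0)) \<and>
     (\<forall>f \<in> V. \<exists>c. f = row_comb c X)"

definition minimal_state_map :: "real poly mat \<Rightarrow> real poly mat \<Rightarrow> bool" where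
  "minimal_state_map X R \<longleftrightarrow> dim_col X = dim_row R \<and> rows_basis_of X (state_space R)"

definition mod_row :: "real poly vec \<Rightarrow> real poly mat \<Rightarrow> real poly vec" where
  "mod_row f R = (THE g. dim_vec g = dim_vec f \<and>
     (\<exists>s n. strictly_proper_vec s \<and> dim_vec s = dim_vec f \<and> dim_vec n = dim_vec f \<and>
        transpose_mat (rat_inverse R) *\<^sub>v lift_vec f = s + lift_vec n \<and>
        lift_vec g = transpose_mat (lift_mat R) *\<^sub>v s))"

definition mod_mat :: "real poly mat \<Rightarrow> real poly mat \<Rightarrow> real poly mat" where
  "mod_mat X R = mat (dim_row X) (dim_col X) (\<lambda>(i,j). mod_row (row X i) R $ j)"

definition const_mat :: "real mat \<Rightarrow> real poly mat" where
  "const_mat P = map_mat (\<lambda>x. [:x:]) P"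

end

theory Submission
  imports Defs "HOL-Library.Function_Algebras" "Jordan_Normal_Form.Gauss_Jordan_Elimination"
begin

text \<open>
  Every row vector \<open>f\<close> splits uniquely as \<open>f = g + h R\<close> with \<open>g \<in> \<X>(R)\<close>: write
  \<open>f R\<^sup>-\<^sup>1 = s + h\<close> with \<open>s\<close> strictly proper and \<open>h\<close> polynomial and put \<open>g = s R\<close>.
  Hence \<open>\<X>(R)\<close> is a complement of the row module of \<open>R\<close>, and its dimension can be read off
  an upper triangular matrix \<open>T\<close> with the same row module and the same determinant up to sign
  (obtained by Euclidean row reduction): the vectors whose \<open>j\<close>-th entry has degree below
  \<open>deg T\<^sub>j\<^sub>j\<close> form a complement of dimension \<open>\<Sum>\<^sub>j deg T\<^sub>j\<^sub>j = deg det R\<close>.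
  If \<open>R\<^sub>2 R\<^sub>1\<^sup>-\<^sup>1\<close> is strictly proper, then so are \<open>f R\<^sub>1\<^sup>-\<^sup>1 = (f R\<^sub>2\<^sup>-\<^sup>1)(R\<^sub>2 R\<^sub>1\<^sup>-\<^sup>1)\<close> for
  \<open>f \<in> \<X>(R\<^sub>2)\<close> and \<open>det R\<^sub>2 / det R\<^sub>1 = det (R\<^sub>2 R\<^sub>1\<^sup>-\<^sup>1)\<close>; so \<open>\<X>(R\<^sub>2) \<subseteq> \<X>(R\<^sub>1)\<close>,
  \<open>n\<^sub>2 < n\<^sub>1\<close>, and a basis of \<open>\<X>(R\<^sub>2)\<close> extends to one of \<open>\<X>(R\<^sub>1)\<close>. The rows of
  \<open>X\<^sub>1' mod R\<^sub>2\<close> lie in \<open>\<X>(R\<^sub>2)\<close>, which gives the constant matrix \<open>\<Pi>\<close>.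
\<close>

section \<open>Strictly proper rational functions\<close>

lemma Fract_eq_0_iff: "q \<noteq> 0 \<Longrightarrow> Fract p q = 0 \<longleftrightarrow> p = (0::'a::idom)"
  by (simp add: Zero_fract_def eq_fract)

lemma strictly_proper_Fract_iff:
  assumes q: "q \<noteq> 0"
  shows "strictly_proper (Fract p q) \<longleftrightarrow> p = 0 \<or> degree p < degree q"
proof
  assume "strictly_proper (Fract p q)"
  then consider "p = 0" | p' q' where "q' \<noteq> 0" "p * q' = p' * q" "degree p' < degree q'"
    unfolding strictly_proper_def using q by (auto simp: Fract_eq_0_iff eq_fract)
  then show "p = 0 \<or> degree p < degree q"
  proof cases
    case 2
    show ?thesis
    proof (cases "p = 0")
      case False
      then have "p' \<noteq> 0" using 2 q by auto
      then have "degree p + degree q' = degree p' + degree q"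
        using 2 False q by (metis degree_mult_eq)
      then show ?thesis using 2 by linarith
    qed simp
  qed simp
next
  assume "p = 0 \<or> degree p < degree q"
  then show "strictly_proper (Fract p q)"
    unfolding strictly_proper_def using q Fract_eq_0_iff by blast
qed

lemma strictly_proper_0 [simp]: "strictly_proper 0"
  by (simp add: strictly_proper_def)

lemma strictly_proper_add:
  assumes "strictly_proper x" "strictly_proper y"
  shows "strictly_proper (x + y)"
proof -
  obtain a b where x: "x = Fract a b" "b \<noteq> 0" by (cases x)
  obtain c d where y: "y = Fract c d" "d \<noteq> 0" by (cases y)
  have a: "a = 0 \<or> degree a < degree b" and c: "c = 0 \<or> degree c < degree d"
    using assms x y strictly_proper_Fract_iff by auto
  have "a * d = 0 \<or> degree (a * d) < degree (b * d)" "c * b = 0 \<or> degree (c * b) < degree (b * d)"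
    using a c x y by (cases "a = 0"; cases "c = 0"; simp add: degree_mult_eq)+
  then have "a * d + c * b = 0 \<or> degree (a * d + c * b) < degree (b * d)"
    using degree_add_le_max[of "a * d" "c * b"] by auto
  then show ?thesis using x y by (simp add: strictly_proper_Fract_iff)
qed

lemma strictly_proper_mult:
  assumes "strictly_proper x" "strictly_proper y"
  shows "strictly_proper (x * y)"
proof -
  obtain a b where x: "x = Fract a b" "b \<noteq> 0" by (cases x)
  obtain c d where y: "y = Fract c d" "d \<noteq> 0" by (cases y)
  have "a = 0 \<or> degree a < degree b" "c = 0 \<or> degree c < degree d"
    using assms x y strictly_proper_Fract_iff by auto
  then have "a * c = 0 \<or> degree (a * c) < degree (b * d)"
    using x y by (cases "a = 0 \<or> c = 0") (auto simp: degree_mult_eq)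
  then show ?thesis using x y by (simp add: strictly_proper_Fract_iff)
qed

lemma strictly_proper_const_mult:
  assumes "strictly_proper y"
  shows "strictly_proper (to_fract [:c:] * y)"
proof -
  obtain a b where y: "y = Fract a b" "b \<noteq> 0" by (cases y)
  have "a = 0 \<or> degree a < degree b" using assms y strictly_proper_Fract_iff by auto
  then have "[:c:] * a = 0 \<or> degree ([:c:] * a) < degree b"
    using degree_smult_le[of c a] by auto
  then show ?thesis using y by (simp add: to_fract_def strictly_proper_Fract_iff)
qed

lemma strictly_proper_uminus: "strictly_proper x \<Longrightarrow> strictly_proper (- x)"
  by (cases x) (simp add: strictly_proper_Fract_iff)

lemma strictly_proper_diff:
  "strictly_proper x \<Longrightarrow> strictly_proper y \<Longrightarrow> strictly_proper (x - y)"
  using strictly_proper_add[of x "- y"] strictly_proper_uminus by simp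

lemma strictly_proper_sum:
  "(\<And>i. i \<in> A \<Longrightarrow> strictly_proper (f i)) \<Longrightarrow> strictly_proper (sum f A)"
  by (induction A rule: infinite_finite_induct) (auto intro: strictly_proper_add)

lemma strictly_proper_prod:
  "finite A \<Longrightarrow> A \<noteq> {} \<Longrightarrow> (\<And>i. i \<in> A \<Longrightarrow> strictly_proper (f i)) \<Longrightarrow>
    strictly_proper (prod f A)"
  by (induction A rule: finite_ne_induct) (auto intro: strictly_proper_mult)

lemma strictly_proper_to_fract_iff: "strictly_proper (to_fract p) \<longleftrightarrow> p = 0"
  by (simp add: to_fract_def strictly_proper_Fract_iff)

lemma polynomial_part_exists: "\<exists>p s. x = to_fract p + s \<and> strictly_proper s"
proof -
  obtain a b where x: "x = Fract a b" "b \<noteq> (0::real poly)" by (cases x)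
  then have "x = to_fract (a div b) + Fract (a mod b) b"
    by (simp add: to_fract_def eq_fract algebra_simps)
  moreover have "strictly_proper (Fract (a mod b) b)"
    using x by (simp add: strictly_proper_Fract_iff) (metis degree_mod_less)
  ultimately show ?thesis by blast
qed

lemma polynomial_part_unique:
  assumes "to_fract p + s = to_fract p' + s'" "strictly_proper s" "strictly_proper s'"
  shows "p = p'" "s = s'"
proof -
  have "to_fract (p - p') = s' - s" using assms(1) by (simp add: algebra_simps)
  then have "strictly_proper (to_fract (p - p'))" using strictly_proper_diff assms(2,3) by metis
  then show "p = p'" by (simp only: strictly_proper_to_fract_iff right_minus_eq)
  then show "s = s'" using assms(1) by simp
qed

lemma strictly_proper_det:
  assumes M: "M \<in> carrier_mat w w" and w: "0 < w" and sp: "strictly_proper_mat M"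
  shows "strictly_proper (det M)"
  unfolding det_def'[OF M]
proof (rule strictly_proper_sum)
  fix p assume "p \<in> {p. p permutes {0..<w}}"
  then have p: "p permutes {0..<w}" by simp
  have "strictly_proper (\<Prod>i = 0..<w. M $$ (i, p i))"
  proof (rule strictly_proper_prod)
    fix i assume i: "i \<in> {0..<w}"
    then have "p i < w" using permutes_in_image[OF p] by simp
    then show "strictly_proper (M $$ (i, p i))"
      using sp M i unfolding strictly_proper_mat_def by auto
  qed (use w in auto)
  then show "strictly_proper (signof p * (\<Prod>i = 0..<w. M $$ (i, p i)))"
    by (cases rule: sign_cases[of p]) (auto intro: strictly_proper_uminus)
qed

definition vec_mat_mult :: "'a::comm_ring_1 vec \<Rightarrow> 'a mat \<Rightarrow> 'a vec" where
  "vec_mat_mult v A = transpose_mat A *\<^sub>v v"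

lemma vec_mat_mult_carrier [simp]: "A \<in> carrier_mat n m \<Longrightarrow> vec_mat_mult v A \<in> carrier_vec m"
  unfolding vec_mat_mult_def carrier_vec_def by auto

lemma dim_vec_mat_mult [simp]: "dim_vec (vec_mat_mult v A) = dim_col A"
  unfolding vec_mat_mult_def by auto

lemma index_vec_mat_mult:
  assumes "A \<in> carrier_mat n m" "v \<in> carrier_vec n" "j < m"
  shows "vec_mat_mult v A $ j = (\<Sum>i = 0..<n. A $$ (i,j) * v $ i)"
  using assms unfolding vec_mat_mult_def by (auto simp: scalar_prod_def)

lemma vec_mat_mult_assoc:
  assumes "v \<in> carrier_vec n" "A \<in> carrier_mat n m" "B \<in> carrier_mat m k"
  shows "vec_mat_mult (vec_mat_mult v A) B = vec_mat_mult v (A * B)"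
  unfolding vec_mat_mult_def using assms
  by (simp add: transpose_mult assoc_mult_mat_vec[of "transpose_mat B" k m "transpose_mat A" n])

lemma vec_mat_mult_one: "v \<in> carrier_vec n \<Longrightarrow> vec_mat_mult v (1\<^sub>m n) = v"
  unfolding vec_mat_mult_def by (simp add: transpose_one)

lemma vec_mat_mult_zero: "A \<in> carrier_mat n m \<Longrightarrow> vec_mat_mult (0\<^sub>v n) A = 0\<^sub>v m"
  by (intro eq_vecI) (auto simp: index_vec_mat_mult)

lemma vec_mat_mult_add:
  assumes "v \<in> carrier_vec n" "u \<in> carrier_vec n" "A \<in> carrier_mat n m"
  shows "vec_mat_mult (v + u) A = vec_mat_mult v A + vec_mat_mult u A"
  using assms by (intro eq_vecI) (auto simp: index_vec_mat_mult sum.distrib algebra_simps)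

lemma vec_mat_mult_minus:
  assumes "v \<in> carrier_vec n" "u \<in> carrier_vec n" "A \<in> carrier_mat n m"
  shows "vec_mat_mult (v - u) A = vec_mat_mult v A - vec_mat_mult u A"
  using assms by (intro eq_vecI) (auto simp: index_vec_mat_mult sum_subtractf algebra_simps)

lemma vec_mat_mult_smult:
  assumes "v \<in> carrier_vec n" "A \<in> carrier_mat n m"
  shows "vec_mat_mult (a \<cdot>\<^sub>v v) A = a \<cdot>\<^sub>v vec_mat_mult v A"
  using assms by (intro eq_vecI) (auto simp: index_vec_mat_mult sum_distrib_left algebra_simps)

lemma vec_mat_mult_unit_vec:
  assumes "A \<in> carrier_mat n m" "i < n" "j < m"
  shows "vec_mat_mult (unit_vec n i) A $ j = A $$ (i,j)"
proof -
  have "vec_mat_mult (unit_vec n i) A $ j = (\<Sum>k = 0..<n. A $$ (k,j) * unit_vec n i $ k)"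
    using assms by (simp add: index_vec_mat_mult)
  also have "\<dots> = (\<Sum>k = 0..<n. if k = i then A $$ (k,j) else 0)"
    by (rule sum.cong) (auto simp: unit_vec_def)
  finally show ?thesis using assms(2) by simp
qed

lemma lift_rat_eq_to_fract: "lift_rat = to_fract"
  by (rule ext) (simp add: lift_rat_def to_fract_def)

lemma lift_mat_eq_map_to_fract: "lift_mat R = map_mat to_fract R"
  by (simp add: lift_mat_def lift_rat_eq_to_fract)

lemma lift_vec_eq_map_to_fract: "lift_vec f = map_vec to_fract f"
  by (simp add: lift_vec_def lift_rat_eq_to_fract)

interpretation to_fract_hom: inj_comm_ring_hom "to_fract :: real poly \<Rightarrow> real poly fract"
  by unfold_locales auto

lemma dim_lift_vec [simp]: "dim_vec (lift_vec v) = dim_vec v"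
  by (simp add: lift_vec_def)

lemma lift_vec_carrier_iff [simp]: "lift_vec v \<in> carrier_vec n \<longleftrightarrow> v \<in> carrier_vec n"
  unfolding carrier_vec_def by (simp only: mem_Collect_eq dim_lift_vec)

lemma index_lift_vec [simp]: "i < dim_vec v \<Longrightarrow> lift_vec v $ i = to_fract (v $ i)"
  by (simp add: lift_vec_eq_map_to_fract)

lemma lift_mat_carrier_iff [simp]: "lift_mat A \<in> carrier_mat n m \<longleftrightarrow> A \<in> carrier_mat n m"
  unfolding carrier_mat_def lift_mat_def by simp

lemma lift_vec_inj: "lift_vec u = lift_vec v \<Longrightarrow> u = v"
  unfolding lift_vec_eq_map_to_fract by (metis to_fract_hom.vec_hom_inj)

lemma lift_vec_add:
  "u \<in> carrier_vec n \<Longrightarrow> v \<in> carrier_vec n \<Longrightarrow> lift_vec (u + v) = lift_vec u + lift_vec v"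
  by (intro eq_vecI) auto

lemma lift_vec_minus:
  "u \<in> carrier_vec n \<Longrightarrow> v \<in> carrier_vec n \<Longrightarrow> lift_vec (u - v) = lift_vec u - lift_vec v"
  by (intro eq_vecI) auto

lemma lift_vec_const_smult: "lift_vec ([:c:] \<cdot>\<^sub>v f) = to_fract [:c:] \<cdot>\<^sub>v lift_vec f"
proof (rule eq_vecI)
  fix i assume "i < dim_vec (to_fract [:c:] \<cdot>\<^sub>v lift_vec f)"
  then show "lift_vec ([:c:] \<cdot>\<^sub>v f) $ i = (to_fract [:c:] \<cdot>\<^sub>v lift_vec f) $ i"
    by (simp flip: to_fract_mult)
qed simp

lemma lift_vec_mat_mult:
  assumes "v \<in> carrier_vec n" "A \<in> carrier_mat n m"
  shows "lift_vec (vec_mat_mult v A) = vec_mat_mult (lift_vec v) (lift_mat A)"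
  unfolding vec_mat_mult_def lift_vec_eq_map_to_fract lift_mat_eq_map_to_fract using assms
  by (simp add: to_fract_hom.mult_mat_vec_hom[of _ m n] map_mat_transpose)

lemma det_lift_mat: "det (lift_mat R) = to_fract (det R)"
  by (simp add: lift_mat_eq_map_to_fract)

lemma rat_inverse_carrier: "R \<in> carrier_mat w w \<Longrightarrow> rat_inverse R \<in> carrier_mat w w"
  unfolding rat_inverse_def using adj_mat(1)[of "lift_mat R" w] by simp

context
  fixes R :: "real poly mat" and w :: nat
  assumes R: "R \<in> carrier_mat w w" and det_R: "det R \<noteq> 0"
begin

lemma rat_inverse_mult_left: "rat_inverse R * lift_mat R = 1\<^sub>m w"
proof -
  have L: "lift_mat R \<in> carrier_mat w w" using R by simp
  have "rat_inverse R * lift_mat R =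
      inverse (det (lift_mat R)) \<cdot>\<^sub>m (adj_mat (lift_mat R) * lift_mat R)"
    unfolding rat_inverse_def using adj_mat(1)[OF L] L by (simp add: mult_smult_assoc_mat)
  also have "\<dots> = 1\<^sub>m w"
    unfolding adj_mat(3)[OF L] using det_R by (intro eq_matI) (auto simp: det_lift_mat)
  finally show ?thesis .
qed

lemma rat_inverse_mult_right: "lift_mat R * rat_inverse R = 1\<^sub>m w"
proof -
  have L: "lift_mat R \<in> carrier_mat w w" using R by simp
  have "lift_mat R * rat_inverse R =
      inverse (det (lift_mat R)) \<cdot>\<^sub>m (lift_mat R * adj_mat (lift_mat R))"
    unfolding rat_inverse_def using adj_mat(1)[OF L] L by (simp add: mult_smult_distrib)
  also have "\<dots> = 1\<^sub>m w"
    unfolding adj_mat(2)[OF L] using det_R by (intro eq_matI) (auto simp: det_lift_mat)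
  finally show ?thesis .
qed

lemma vec_mat_mult_lift_mat_rat_inverse:
  "v \<in> carrier_vec w \<Longrightarrow> vec_mat_mult (vec_mat_mult v (lift_mat R)) (rat_inverse R) = v"
  using R rat_inverse_carrier[OF R]
  by (simp add: vec_mat_mult_assoc[of _ w _ w _ w] rat_inverse_mult_right vec_mat_mult_one)

lemma vec_mat_mult_rat_inverse_lift_mat:
  "v \<in> carrier_vec w \<Longrightarrow> vec_mat_mult (vec_mat_mult v (rat_inverse R)) (lift_mat R) = v"
  using R rat_inverse_carrier[OF R]
  by (simp add: vec_mat_mult_assoc[of _ w _ w _ w] rat_inverse_mult_left vec_mat_mult_one)

end

section \<open>The state space and the remainder modulo \<open>R\<close>\<close>

lemma state_space_iff:
  assumes "R \<in> carrier_mat w w"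
  shows "f \<in> state_space R \<longleftrightarrow>
    f \<in> carrier_vec w \<and> strictly_proper_vec (vec_mat_mult (lift_vec f) (rat_inverse R))"
  using assms unfolding state_space_def vec_mat_mult_def carrier_vec_def by auto

lemma state_space_carrier: "R \<in> carrier_mat w w \<Longrightarrow> f \<in> state_space R \<Longrightarrow> f \<in> carrier_vec w"
  by (simp add: state_space_iff)

context
  fixes R :: "real poly mat" and w :: nat
  assumes R: "R \<in> carrier_mat w w" and det_R: "det R \<noteq> 0"
begin

private lemma rat_inverse_R: "rat_inverse R \<in> carrier_mat w w"
  using rat_inverse_carrier[OF R] .

lemma state_space_add: "f \<in> state_space R \<Longrightarrow> g \<in> state_space R \<Longrightarrow> f + g \<in> state_space R"
  unfolding state_space_iff[OF R] using rat_inverse_R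
  by (auto simp: lift_vec_add[of _ w] vec_mat_mult_add[of _ w _ _ w] strictly_proper_vec_def
      intro!: strictly_proper_add)

lemma state_space_const_smult: "f \<in> state_space R \<Longrightarrow> [:c:] \<cdot>\<^sub>v f \<in> state_space R"
  unfolding state_space_iff[OF R] using rat_inverse_R
  by (auto simp: lift_vec_const_smult vec_mat_mult_smult[of _ w _ w] strictly_proper_vec_def
      intro!: strictly_proper_const_mult)

private definition is_remainder :: "real poly vec \<Rightarrow> real poly vec \<Rightarrow> bool" where
  "is_remainder f g \<longleftrightarrow> dim_vec g = dim_vec f \<and>
     (\<exists>s n. strictly_proper_vec s \<and> dim_vec s = dim_vec f \<and> dim_vec n = dim_vec f \<and>
        transpose_mat (rat_inverse R) *\<^sub>v lift_vec f = s + lift_vec n \<and>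
        lift_vec g = transpose_mat (lift_mat R) *\<^sub>v s)"

private lemma mod_row_eq_The: "mod_row f R = (THE g. is_remainder f g)"
  unfolding mod_row_def is_remainder_def ..

private lemma is_remainder_unique:
  assumes f: "f \<in> carrier_vec w" and "is_remainder f g" "is_remainder f g'"
  shows "g = g'"
proof -
  obtain s n where s: "strictly_proper_vec s" "dim_vec s = w" "dim_vec n = w"
    "vec_mat_mult (lift_vec f) (rat_inverse R) = s + lift_vec n"
    "lift_vec g = vec_mat_mult s (lift_mat R)"
    using assms unfolding is_remainder_def vec_mat_mult_def by auto
  obtain s' n' where s': "strictly_proper_vec s'" "dim_vec s' = w" "dim_vec n' = w"
    "vec_mat_mult (lift_vec f) (rat_inverse R) = s' + lift_vec n'"
    "lift_vec g' = vec_mat_mult s' (lift_mat R)"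
    using assms unfolding is_remainder_def vec_mat_mult_def by auto
  have "s = s'"
  proof (rule eq_vecI)
    fix j assume j: "j < dim_vec s'"
    have "(s + lift_vec n) $ j = (s' + lift_vec n') $ j" using s s' by simp
    then have "to_fract (n $ j) + s $ j = to_fract (n' $ j) + s' $ j"
      using j s s' by (simp add: add.commute)
    then show "s $ j = s' $ j"
      using polynomial_part_unique(2) s s' j by (auto simp: strictly_proper_vec_def)
  qed (use s s' in simp)
  then have "lift_vec g = lift_vec g'" using s s' by simp
  then show ?thesis by (rule lift_vec_inj)
qed

private lemma is_remainder_intro:
  assumes g: "g \<in> state_space R" and h: "h \<in> carrier_vec w"
  shows "is_remainder (g + vec_mat_mult h R) g"
proof -
  have g_w: "g \<in> carrier_vec w" using g state_space_carrier[OF R] by blast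
  define s where "s = vec_mat_mult (lift_vec g) (rat_inverse R)"
  have "strictly_proper_vec s" using g state_space_iff[OF R] s_def by simp
  moreover have "s \<in> carrier_vec w" using s_def rat_inverse_R by simp
  moreover have "vec_mat_mult (lift_vec (g + vec_mat_mult h R)) (rat_inverse R) = s + lift_vec h"
    using g_w h R rat_inverse_R
    by (simp add: s_def lift_vec_add[of _ w] lift_vec_mat_mult vec_mat_mult_add[of _ w _ _ w]
        vec_mat_mult_lift_mat_rat_inverse[OF R det_R])
  moreover have "lift_vec g = vec_mat_mult s (lift_mat R)"
    unfolding s_def using g_w vec_mat_mult_rat_inverse_lift_mat[OF R det_R] by simp
  ultimately show ?thesis
    unfolding is_remainder_def using g_w h R
    by (intro conjI exI[of _ s] exI[of _ h]) (auto simp: vec_mat_mult_def)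
qed

lemma mod_row_eq:
  assumes "g \<in> state_space R" "h \<in> carrier_vec w"
  shows "mod_row (g + vec_mat_mult h R) R = g"
proof -
  have f_w: "g + vec_mat_mult h R \<in> carrier_vec w"
    using assms state_space_carrier[OF R] R by auto
  show ?thesis
    unfolding mod_row_eq_The
    using is_remainder_intro[OF assms] is_remainder_unique[OF f_w]
    by (intro the_equality) blast+
qed

lemma remainder_decomposition_exists:
  assumes f: "f \<in> carrier_vec w"
  shows "\<exists>g h. g \<in> state_space R \<and> h \<in> carrier_vec w \<and> f = g + vec_mat_mult h R"
proof -
  define v where "v = vec_mat_mult (lift_vec f) (rat_inverse R)"
  have v_w: "v \<in> carrier_vec w" using v_def rat_inverse_R by simp
  have "\<forall>j. \<exists>p s. v $ j = to_fract p + s \<and> strictly_proper s"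
    using polynomial_part_exists by blast
  then obtain P S where PS: "\<And>j. v $ j = to_fract (P j) + S j \<and> strictly_proper (S j)"
    by metis
  define n where "n = vec w P"
  define s where "s = vec w S"
  have n_w: "n \<in> carrier_vec w" and s_w: "s \<in> carrier_vec w" unfolding n_def s_def by auto
  have v_eq: "v = s + lift_vec n"
    using PS v_w unfolding n_def s_def by (intro eq_vecI) (auto simp: add.commute)
  define g where "g = f - vec_mat_mult n R"
  have g_w: "g \<in> carrier_vec w" using g_def f R by simp
  have "lift_vec g = lift_vec f - vec_mat_mult (lift_vec n) (lift_mat R)"
    unfolding g_def using lift_vec_minus[OF f vec_mat_mult_carrier[OF R]] lift_vec_mat_mult[OF n_w R]
    by simp
  also have "lift_vec f = vec_mat_mult v (lift_mat R)"
    unfolding v_def using f vec_mat_mult_rat_inverse_lift_mat[OF R det_R] by simp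
  also have "\<dots> = vec_mat_mult s (lift_mat R) + vec_mat_mult (lift_vec n) (lift_mat R)"
    unfolding v_eq using vec_mat_mult_add[of s w "lift_vec n" "lift_mat R" w] s_w n_w R by simp
  finally have "lift_vec g = vec_mat_mult s (lift_mat R)"
    using s_w n_w R by auto
  then have "vec_mat_mult (lift_vec g) (rat_inverse R) = s"
    using vec_mat_mult_lift_mat_rat_inverse[OF R det_R] s_w by simp
  then have "g \<in> state_space R"
    using g_w PS s_w unfolding state_space_iff[OF R] by (auto simp: strictly_proper_vec_def s_def)
  moreover have "f = g + vec_mat_mult n R" unfolding g_def using f n_w R by auto
  ultimately show ?thesis using n_w by blast
qed

lemma mod_row_decomposition:
  assumes "f \<in> carrier_vec w"
  shows "mod_row f R \<in> state_space R" "\<exists>h \<in> carrier_vec w. f = mod_row f R + vec_mat_mult h R"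
proof -
  obtain g h where "g \<in> state_space R" "h \<in> carrier_vec w" "f = g + vec_mat_mult h R"
    using remainder_decomposition_exists[OF assms] by blast
  then show "mod_row f R \<in> state_space R" "\<exists>h \<in> carrier_vec w. f = mod_row f R + vec_mat_mult h R"
    using mod_row_eq by auto
qed

lemmas mod_row_in_state_space = mod_row_decomposition(1)

lemma mod_row_carrier: "f \<in> carrier_vec w \<Longrightarrow> mod_row f R \<in> carrier_vec w"
  using mod_row_in_state_space state_space_carrier[OF R] by blast

lemma mod_row_state_space: "g \<in> state_space R \<Longrightarrow> mod_row g R = g"
  using mod_row_eq[of g "0\<^sub>v w"] vec_mat_mult_zero[OF R] state_space_carrier[OF R] by auto

lemma mod_row_add:
  assumes f: "f \<in> carrier_vec w" and g: "g \<in> carrier_vec w"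
  shows "mod_row (f + g) R = mod_row f R + mod_row g R"
proof -
  obtain hf hg where h: "hf \<in> carrier_vec w" "hg \<in> carrier_vec w"
    and f_eq: "f = mod_row f R + vec_mat_mult hf R" and g_eq: "g = mod_row g R + vec_mat_mult hg R"
    using mod_row_decomposition(2) f g by blast
  have carriers: "mod_row f R \<in> carrier_vec w" "mod_row g R \<in> carrier_vec w"
    "vec_mat_mult hf R \<in> carrier_vec w" "vec_mat_mult hg R \<in> carrier_vec w"
    using mod_row_carrier f g R by auto
  have "f + g = (mod_row f R + mod_row g R) + (vec_mat_mult hf R + vec_mat_mult hg R)"
    using carriers by (subst f_eq, subst g_eq) (intro eq_vecI; simp)
  also have "vec_mat_mult hf R + vec_mat_mult hg R = vec_mat_mult (hf + hg) R"
    using vec_mat_mult_add[OF h R] by simp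
  finally show ?thesis
    using mod_row_eq state_space_add mod_row_in_state_space f g h by simp
qed

lemma mod_row_const_smult:
  assumes f: "f \<in> carrier_vec w"
  shows "mod_row ([:c:] \<cdot>\<^sub>v f) R = [:c:] \<cdot>\<^sub>v mod_row f R"
proof -
  obtain h where h: "h \<in> carrier_vec w" and f_eq: "f = mod_row f R + vec_mat_mult h R"
    using mod_row_decomposition(2) f by blast
  have carriers: "mod_row f R \<in> carrier_vec w" "vec_mat_mult h R \<in> carrier_vec w"
    using mod_row_carrier f R by auto
  have "[:c:] \<cdot>\<^sub>v f = [:c:] \<cdot>\<^sub>v mod_row f R + [:c:] \<cdot>\<^sub>v vec_mat_mult h R"
    using carriers R by (subst f_eq) (intro eq_vecI; simp add: algebra_simps)
  also have "[:c:] \<cdot>\<^sub>v vec_mat_mult h R = vec_mat_mult ([:c:] \<cdot>\<^sub>v h) R"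
    using vec_mat_mult_smult[OF h R] by simp
  finally show ?thesis
    using mod_row_eq state_space_const_smult mod_row_in_state_space f h by simp
qed

lemma mod_row_diff_row_module:
  assumes f: "f \<in> carrier_vec w" and h: "h \<in> carrier_vec w"
  shows "mod_row (f - vec_mat_mult h R) R = mod_row f R"
proof -
  obtain hf where hf: "hf \<in> carrier_vec w" and f_eq: "f = mod_row f R + vec_mat_mult hf R"
    using mod_row_decomposition(2) f by blast
  have carriers: "mod_row f R \<in> carrier_vec w"
    "vec_mat_mult hf R \<in> carrier_vec w" "vec_mat_mult h R \<in> carrier_vec w"
    using mod_row_carrier f R by auto
  have "f - vec_mat_mult h R = mod_row f R + (vec_mat_mult hf R - vec_mat_mult h R)"
    using carriers by (subst f_eq) (intro eq_vecI; simp)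
  also have "vec_mat_mult hf R - vec_mat_mult h R = vec_mat_mult (hf - h) R"
    using vec_mat_mult_minus[OF hf h R] by simp
  finally show ?thesis using mod_row_eq mod_row_in_state_space f hf h by simp
qed

end

lemma state_space_subset:
  assumes R1: "R1 \<in> carrier_mat w w" and d1: "det R1 \<noteq> 0"
    and R2: "R2 \<in> carrier_mat w w" and d2: "det R2 \<noteq> 0"
    and sp: "strictly_proper_mat (lift_mat R2 * rat_inverse R1)"
  shows "state_space R2 \<subseteq> state_space R1"
proof
  fix g assume g: "g \<in> state_space R2"
  have g_w: "g \<in> carrier_vec w" using g state_space_carrier[OF R2] by blast
  define s where "s = vec_mat_mult (lift_vec g) (rat_inverse R2)"
  define M where "M = lift_mat R2 * rat_inverse R1"
  have s_w: "s \<in> carrier_vec w" unfolding s_def using rat_inverse_carrier[OF R2] by simp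
  have M: "M \<in> carrier_mat w w" unfolding M_def using R2 rat_inverse_carrier[OF R1] by simp
  have "rat_inverse R2 * M = rat_inverse R1"
    unfolding M_def using rat_inverse_carrier[OF R1] rat_inverse_carrier[OF R2] R2
    by (simp add: assoc_mult_mat[symmetric, of _ w w _ w _ w] rat_inverse_mult_left[OF R2 d2])
  then have "vec_mat_mult (lift_vec g) (rat_inverse R1) = vec_mat_mult s M"
    unfolding s_def using vec_mat_mult_assoc[of "lift_vec g" w "rat_inverse R2" w M w]
      g_w rat_inverse_carrier[OF R2] M by simp
  moreover have "strictly_proper_vec (vec_mat_mult s M)"
    unfolding strictly_proper_vec_def
  proof (intro allI impI)
    fix j assume "j < dim_vec (vec_mat_mult s M)"
    then have j: "j < w" using M by simp
    have "strictly_proper_vec s" using g s_def state_space_iff[OF R2] by simp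
    moreover have "strictly_proper_mat M" using sp unfolding M_def .
    ultimately have "strictly_proper (s $ i)" "strictly_proper (M $$ (i, j))" if "i < w" for i
      using that s_w M j unfolding strictly_proper_mat_def strictly_proper_vec_def by auto
    then show "strictly_proper (vec_mat_mult s M $ j)"
      unfolding index_vec_mat_mult[OF M s_w j]
      by (auto intro!: strictly_proper_sum strictly_proper_mult)
  qed
  ultimately show "g \<in> state_space R1" using g_w state_space_iff[OF R1] by simp
qed

lemma degree_det_less:
  assumes R1: "R1 \<in> carrier_mat w w" and d1: "det R1 \<noteq> 0"
    and R2: "R2 \<in> carrier_mat w w" and d2: "det R2 \<noteq> 0" and w: "0 < w"
    and sp: "strictly_proper_mat (lift_mat R2 * rat_inverse R1)"
  shows "degree (det R2) < degree (det R1)"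
proof -
  define M where "M = lift_mat R2 * rat_inverse R1"
  have L1: "lift_mat R1 \<in> carrier_mat w w" using R1 by simp
  have M: "M \<in> carrier_mat w w" unfolding M_def using R2 rat_inverse_carrier[OF R1] by simp
  have "M * lift_mat R1 = lift_mat R2"
    unfolding M_def using rat_inverse_carrier[OF R1] L1 R2
    by (simp add: assoc_mult_mat[of _ w w _ w _ w] rat_inverse_mult_left[OF R1 d1])
  then have "det M * to_fract (det R1) = to_fract (det R2)"
    using det_mult[OF M L1] by (simp add: det_lift_mat)
  then have "det M = Fract (det R2) (det R1)"
    using d1 by (simp add: eq_divide_eq Fract_conv_to_fract)
  moreover have "strictly_proper (det M)" using strictly_proper_det[OF M w] sp M_def by simp
  ultimately show ?thesis using strictly_proper_Fract_iff[OF d1] d2 by simp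
qed

section \<open>Triangularization by row operations\<close>

definition row_module :: "real poly mat \<Rightarrow> real poly vec set" where
  "row_module R = {vec_mat_mult h R | h. h \<in> carrier_vec (dim_row R)}"

lemma row_module_mult_subset:
  assumes A: "A \<in> carrier_mat n m" and E: "E \<in> carrier_mat n n"
  shows "row_module (E * A) \<subseteq> row_module A"
proof
  fix x assume "x \<in> row_module (E * A)"
  then obtain h where h: "h \<in> carrier_vec n" "x = vec_mat_mult h (E * A)"
    unfolding row_module_def using E by auto
  then have "x = vec_mat_mult (vec_mat_mult h E) A" using vec_mat_mult_assoc[OF h(1) E A] by simp
  moreover have "vec_mat_mult h E \<in> carrier_vec n" using E by simp
  ultimately show "x \<in> row_module A" unfolding row_module_def using A by auto
qed

lemma addrow_addrow_neg:
  assumes A: "(A :: 'a::comm_ring_1 mat) \<in> carrier_mat n m" and kl: "k \<noteq> l" "k < n" "l < n"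
  shows "addrow (-a) k l (addrow a k l A) = A"
  using assms by (intro eq_matI) (auto simp: algebra_simps)

lemma swaprows_swaprows:
  assumes A: "A \<in> carrier_mat n m" and "k < n" "l < n"
  shows "swaprows k l (swaprows k l A) = A"
  using assms by (intro eq_matI) auto

lemma swaprows_same:
  assumes A: "A \<in> carrier_mat n m"
  shows "swaprows k k A = A"
  using assms by (intro eq_matI) auto

lemma row_module_addrow:
  assumes A: "A \<in> carrier_mat n n" and kl: "k \<noteq> l" "k < n" "l < n"
  shows "row_module (addrow a k l A) = row_module A"
proof
  show "row_module (addrow a k l A) \<subseteq> row_module A"
    using row_module_mult_subset[OF A, of "addrow_mat n a k l"] addrow_mat[OF A kl(3)] by simp
  have A': "addrow a k l A \<in> carrier_mat n n" using A by simp
  show "row_module A \<subseteq> row_module (addrow a k l A)"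
    using row_module_mult_subset[OF A', of "addrow_mat n (-a) k l"] addrow_mat[OF A' kl(3), of "-a" k]
      addrow_addrow_neg[OF A kl, of a] by simp
qed

lemma row_module_swaprows:
  assumes A: "A \<in> carrier_mat n n" and kl: "k < n" "l < n"
  shows "row_module (swaprows k l A) = row_module A"
proof
  show "row_module (swaprows k l A) \<subseteq> row_module A"
    using row_module_mult_subset[OF A, of "swaprows_mat n k l"] swaprows_mat[OF A kl] by simp
  have A': "swaprows k l A \<in> carrier_mat n n" using A by simp
  show "row_module A \<subseteq> row_module (swaprows k l A)"
    using row_module_mult_subset[OF A', of "swaprows_mat n k l"] swaprows_mat[OF A' kl]
      swaprows_swaprows[OF A kl] by simp
qed

definition row_equivalent :: "nat \<Rightarrow> real poly mat \<Rightarrow> real poly mat \<Rightarrow> bool" where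
  "row_equivalent n A B \<longleftrightarrow>
     B \<in> carrier_mat n n \<and> row_module B = row_module A \<and> (det B = det A \<or> det B = - det A)"

lemma row_equivalent_refl: "A \<in> carrier_mat n n \<Longrightarrow> row_equivalent n A A"
  unfolding row_equivalent_def by auto

lemma row_equivalent_trans:
  "row_equivalent n A B \<Longrightarrow> row_equivalent n B C \<Longrightarrow> row_equivalent n A C"
  unfolding row_equivalent_def by auto

lemma row_equivalent_carrier: "row_equivalent n A B \<Longrightarrow> B \<in> carrier_mat n n"
  unfolding row_equivalent_def by auto

lemma row_equivalent_addrow:
  assumes A: "A \<in> carrier_mat n n" and kl: "k \<noteq> l" "k < n" "l < n"
  shows "row_equivalent n A (addrow a k l A)"
  unfolding row_equivalent_def using row_module_addrow[OF assms] det_addrow[OF kl(3) kl(1) A] A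
  by simp

lemma row_equivalent_swaprows:
  assumes A: "A \<in> carrier_mat n n" and kl: "k < n" "l < n"
  shows "row_equivalent n A (swaprows k l A)"
proof (cases "k = l")
  case True then show ?thesis using swaprows_same[OF A] row_equivalent_refl[OF A] by simp
next
  case False
  then show ?thesis
    unfolding row_equivalent_def using row_module_swaprows[OF A kl] det_swaprows[OF kl False A] A
    by simp
qed

definition cleared_below_diagonal :: "nat \<Rightarrow> nat \<Rightarrow> real poly mat \<Rightarrow> bool" where
  "cleared_below_diagonal n k A \<longleftrightarrow> (\<forall>i j. j < k \<longrightarrow> j < i \<longrightarrow> i < n \<longrightarrow> A $$ (i,j) = 0)"

lemma reduce_rows_below_pivot:
  assumes A: "A \<in> carrier_mat n n" and k: "k < n"
  shows "m \<le> n \<Longrightarrow> \<exists>B. row_equivalent n A B \<and> (\<forall>i<n. \<forall>j<n. B $$ (i,j) =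
     (if k < i \<and> i < m then A $$ (i,j) - (A $$ (i,k) div A $$ (k,k)) * A $$ (k,j) else A $$ (i,j)))"
proof (induction m)
  case 0
  then show ?case using row_equivalent_refl[OF A] by auto
next
  case (Suc m)
  then obtain B where B: "row_equivalent n A B" and Be: "\<forall>i<n. \<forall>j<n. B $$ (i,j) =
     (if k < i \<and> i < m then A $$ (i,j) - (A $$ (i,k) div A $$ (k,k)) * A $$ (k,j) else A $$ (i,j))"
    by auto
  have Bc: "B \<in> carrier_mat n n" using B row_equivalent_carrier by blast
  show ?case
  proof (cases "k < m")
    case True
    have m: "m < n" using Suc by simp
    define B' where "B' = addrow (- (A $$ (m,k) div A $$ (k,k))) m k B"
    have "row_equivalent n B B'" unfolding B'_def using row_equivalent_addrow[OF Bc _ m k] True by simp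
    moreover have "\<forall>i<n. \<forall>j<n. B' $$ (i,j) =
     (if k < i \<and> i < Suc m then A $$ (i,j) - (A $$ (i,k) div A $$ (k,k)) * A $$ (k,j) else A $$ (i,j))"
      unfolding B'_def using Be Bc True m by auto
    ultimately show ?thesis using row_equivalent_trans[OF B] by blast
  next
    case False
    then show ?thesis using B Be by (intro exI[of _ B]) auto
  qed
qed

lemma division_step:
  assumes A: "A \<in> carrier_mat n n" and Z: "cleared_below_diagonal n k A"
    and i0: "k \<le> i0" "i0 < n" "A $$ (i0,k) \<noteq> 0"
  shows "\<exists>B. row_equivalent n A B \<and> cleared_below_diagonal n k B \<and> B $$ (k,k) = A $$ (i0,k) \<and>
    (\<forall>i. k < i \<longrightarrow> i < n \<longrightarrow> B $$ (i,k) = 0 \<or> degree (B $$ (i,k)) < degree (A $$ (i0,k)))"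
proof -
  have k: "k < n" using i0 by simp
  define A1 where "A1 = swaprows k i0 A"
  have A1: "A1 \<in> carrier_mat n n" unfolding A1_def using A by simp
  have r1: "row_equivalent n A A1" unfolding A1_def using row_equivalent_swaprows[OF A k i0(2)] .
  have A1_entry: "\<And>i j. i < n \<Longrightarrow> j < n \<Longrightarrow>
      A1 $$ (i,j) = (if k = i then A $$ (i0,j) else if i0 = i then A $$ (k,j) else A $$ (i,j))"
    unfolding A1_def using A by simp
  have Z1: "cleared_below_diagonal n k A1"
    using Z i0 A1_entry k unfolding cleared_below_diagonal_def by auto
  have pivot: "A1 $$ (k,k) = A $$ (i0,k)" using A1_entry k by simp
  obtain A2 where r2: "row_equivalent n A1 A2" and A2_entry: "\<forall>i<n. \<forall>j<n. A2 $$ (i,j) =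
     (if k < i \<and> i < n then A1 $$ (i,j) - (A1 $$ (i,k) div A1 $$ (k,k)) * A1 $$ (k,j) else A1 $$ (i,j))"
    using reduce_rows_below_pivot[OF A1 k, of n] by auto
  have "cleared_below_diagonal n k A2" unfolding cleared_below_diagonal_def
  proof (intro allI impI)
    fix i j assume ij: "j < k" "j < i" "i < n"
    then have "A1 $$ (i,j) = 0" "A1 $$ (k,j) = 0"
      using Z1 k unfolding cleared_below_diagonal_def by auto
    then show "A2 $$ (i,j) = 0" using A2_entry ij k by auto
  qed
  moreover have "A2 $$ (k,k) = A $$ (i0,k)" using A2_entry pivot k by simp
  moreover have "A2 $$ (i,k) = 0 \<or> degree (A2 $$ (i,k)) < degree (A $$ (i0,k))"
    if "k < i" "i < n" for i
  proof -
    have "A2 $$ (i,k) = A1 $$ (i,k) mod A1 $$ (k,k)"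
      using A2_entry k that by (simp add: minus_div_mult_eq_mod)
    then show ?thesis using pivot i0(3) by (metis degree_mod_less)
  qed
  ultimately show ?thesis using row_equivalent_trans[OF r1 r2] by blast
qed

text \<open>The Euclidean algorithm on the \<open>k\<close>-th column: the degree of a nonzero entry below the
  diagonal decreases with every division step.\<close>

lemma clear_column_degree:
  assumes "A \<in> carrier_mat n n" "cleared_below_diagonal n k A"
    and "k \<le> i" "i < n" "A $$ (i,k) \<noteq> 0" "degree (A $$ (i,k)) \<le> d"
  shows "\<exists>B. row_equivalent n A B \<and> cleared_below_diagonal n (Suc k) B"
  using assms
proof (induction d arbitrary: A i rule: less_induct)
  case (less d)
  obtain B where r: "row_equivalent n A B" and Z: "cleared_below_diagonal n k B"
    and pivot: "B $$ (k,k) = A $$ (i,k)"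
    and rem: "\<forall>i'. k < i' \<longrightarrow> i' < n \<longrightarrow> B $$ (i',k) = 0 \<or> degree (B $$ (i',k)) < degree (A $$ (i,k))"
    using division_step[OF less.prems(1-5)] by blast
  have B: "B \<in> carrier_mat n n" using r row_equivalent_carrier by blast
  show ?case
  proof (cases "\<exists>i'. k < i' \<and> i' < n \<and> B $$ (i',k) \<noteq> 0")
    case True
    then obtain i' where i': "k < i'" "i' < n" "B $$ (i',k) \<noteq> 0" by blast
    then have "degree (B $$ (i',k)) < d" using rem less.prems(6) by fastforce
    then show ?thesis
      using less.IH[OF _ B Z _ i'(2,3) order_refl] i'(1) row_equivalent_trans[OF r] by fastforce
  next
    case False
    then have "cleared_below_diagonal n (Suc k) B"
      using Z unfolding cleared_below_diagonal_def by (metis less_Suc_eq)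
    then show ?thesis using r by blast
  qed
qed

lemma clear_column:
  assumes A: "A \<in> carrier_mat n n" and k: "k < n" and Z: "cleared_below_diagonal n k A"
  shows "\<exists>B. row_equivalent n A B \<and> cleared_below_diagonal n (Suc k) B"
proof (cases "\<exists>i. k \<le> i \<and> i < n \<and> A $$ (i,k) \<noteq> 0")
  case True
  then obtain i where "k \<le> i \<and> i < n \<and> A $$ (i,k) \<noteq> 0" by blast
  then show ?thesis using clear_column_degree[OF A Z] by blast
next
  case False
  then have "cleared_below_diagonal n (Suc k) A"
    using Z unfolding cleared_below_diagonal_def by (metis less_Suc_eq less_imp_le)
  then show ?thesis using row_equivalent_refl[OF A] by blast
qed

lemma row_equivalent_upper_triangular:
  assumes A: "A \<in> carrier_mat n n"
  shows "\<exists>T. row_equivalent n A T \<and> upper_triangular T"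
proof -
  have "k \<le> n \<Longrightarrow> \<exists>B. row_equivalent n A B \<and> cleared_below_diagonal n k B" for k
  proof (induction k)
    case 0
    then show ?case using row_equivalent_refl[OF A] unfolding cleared_below_diagonal_def by auto
  next
    case (Suc k)
    then obtain B where B: "row_equivalent n A B" "cleared_below_diagonal n k B" by auto
    have "B \<in> carrier_mat n n" using B(1) row_equivalent_carrier by blast
    then show ?case using clear_column[of B n k] Suc B row_equivalent_trans by (meson Suc_le_lessD)
  qed
  then obtain T where T: "row_equivalent n A T" "cleared_below_diagonal n n T" by blast
  have "T \<in> carrier_mat n n" using T(1) row_equivalent_carrier by blast
  then have "upper_triangular T" using T(2) unfolding cleared_below_diagonal_def upper_triangular_def
    by (metis carrier_matD(1) less_trans)
  then show ?thesis using T by blast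
qed

definition reduced_modulo :: "real poly mat \<Rightarrow> real poly vec \<Rightarrow> bool" where
  "reduced_modulo T f \<longleftrightarrow> (\<forall>j<dim_vec f. f $ j = 0 \<or> degree (f $ j) < degree (T $$ (j,j)))"

context
  fixes T :: "real poly mat" and n :: nat
  assumes T: "T \<in> carrier_mat n n" and upper: "upper_triangular T"
    and diag_nonzero: "\<forall>j<n. T $$ (j,j) \<noteq> 0"
begin

private lemma below_diagonal_zero: "i < n \<Longrightarrow> j < i \<Longrightarrow> T $$ (i,j) = 0"
  using upper T unfolding upper_triangular_def by auto

private lemma diff_vec_mat_mult_add_unit:
  assumes f: "f \<in> carrier_vec n" and h: "h \<in> carrier_vec n" and m: "m < n" and j: "j < n"
  shows "(f - vec_mat_mult (h + q \<cdot>\<^sub>v unit_vec n m) T) $ j =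
    (f - vec_mat_mult h T) $ j - q * T $$ (m,j)"
proof -
  have "vec_mat_mult (h + q \<cdot>\<^sub>v unit_vec n m) T =
      vec_mat_mult h T + q \<cdot>\<^sub>v vec_mat_mult (unit_vec n m) T"
    using vec_mat_mult_add[of h n "q \<cdot>\<^sub>v unit_vec n m" T n] vec_mat_mult_smult[of _ n T n] h T by simp
  then show ?thesis using vec_mat_mult_unit_vec[OF T m j] f j T by simp
qed

lemma reduction_exists:
  assumes f: "f \<in> carrier_vec n"
  shows "\<exists>h \<in> carrier_vec n. reduced_modulo T (f - vec_mat_mult h T)"
proof -
  have "m \<le> n \<Longrightarrow> \<exists>h \<in> carrier_vec n. \<forall>j<m.
      (f - vec_mat_mult h T) $ j = 0 \<or> degree ((f - vec_mat_mult h T) $ j) < degree (T $$ (j,j))" for m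
  proof (induction m)
    case 0
    then show ?case by (intro bexI[of _ "0\<^sub>v n"]) auto
  next
    case (Suc m)
    then obtain h where h: "h \<in> carrier_vec n" and reduced: "\<forall>j<m.
        (f - vec_mat_mult h T) $ j = 0 \<or> degree ((f - vec_mat_mult h T) $ j) < degree (T $$ (j,j))"
      by auto
    have m: "m < n" using Suc by simp
    define r where "r = f - vec_mat_mult h T"
    define h' where "h' = h + (r $ m div T $$ (m,m)) \<cdot>\<^sub>v unit_vec n m"
    have h': "h' \<in> carrier_vec n" unfolding h'_def using h by simp
    have r': "(f - vec_mat_mult h' T) $ j = r $ j - (r $ m div T $$ (m,m)) * T $$ (m,j)"
      if "j < n" for j
      unfolding h'_def r_def using diff_vec_mat_mult_add_unit[OF f h m that] .
    have "(f - vec_mat_mult h' T) $ j = 0 \<or> degree ((f - vec_mat_mult h' T) $ j) < degree (T $$ (j,j))"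
      if j: "j < Suc m" for j
    proof (cases "j < m")
      case True
      then show ?thesis using r'[of j] m below_diagonal_zero[OF m True] reduced r_def by simp
    next
      case False
      then have "j = m" using j by simp
      then have "(f - vec_mat_mult h' T) $ j = r $ m mod T $$ (m,m)"
        using r'[of j] m by (simp add: minus_div_mult_eq_mod)
      then show ?thesis using \<open>j = m\<close> diag_nonzero m by (metis degree_mod_less)
    qed
    then show ?case using h' by blast
  qed
  from this[of n] show ?thesis unfolding reduced_modulo_def using f T by auto
qed

text \<open>The first nonzero entry \<open>h\<^sub>j\<close> of \<open>h\<close> makes \<open>(h T)\<^sub>j = h\<^sub>j T\<^sub>j\<^sub>j\<close> too large.\<close>

lemma reduced_row_module_zero:
  assumes h: "h \<in> carrier_vec n" and reduced: "reduced_modulo T (vec_mat_mult h T)"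
  shows "h = 0\<^sub>v n"
proof (rule ccontr)
  assume "h \<noteq> 0\<^sub>v n"
  then have "\<exists>j. j < n \<and> h $ j \<noteq> 0" using h by (metis eq_vecI carrier_vecD index_zero_vec(1,2))
  then obtain j where j: "j < n" "h $ j \<noteq> 0" and first: "\<forall>i<j. \<not> (i < n \<and> h $ i \<noteq> 0)"
    using exists_least_iff[of "\<lambda>j. j < n \<and> h $ j \<noteq> 0"] by blast
  have "vec_mat_mult h T $ j = (\<Sum>i = 0..<n. T $$ (i,j) * h $ i)"
    using index_vec_mat_mult[OF T h j(1)] .
  also have "\<dots> = (\<Sum>i = 0..<n. if i = j then T $$ (j,j) * h $ j else 0)"
  proof (rule sum.cong)
    fix i assume "i \<in> {0..<n}"
    then show "T $$ (i,j) * h $ i = (if i = j then T $$ (j,j) * h $ j else 0)"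
      using first below_diagonal_zero[of i j] by (cases "i < j") auto
  qed simp
  also have "\<dots> = T $$ (j,j) * h $ j" using j by simp
  finally have entry: "vec_mat_mult h T $ j = T $$ (j,j) * h $ j" .
  have "degree (T $$ (j,j)) \<le> degree (T $$ (j,j) * h $ j)"
    using diag_nonzero j by (simp add: degree_mult_eq)
  moreover have "T $$ (j,j) * h $ j \<noteq> 0" using diag_nonzero j by simp
  ultimately show False
    using reduced entry j T unfolding reduced_modulo_def
    by (metis dim_vec_mat_mult carrier_matD(2) leD)
qed

end

text \<open>Vectors of varying dimension do not form a vector space, so a row vector of dimension \<open>w\<close>
  is identified with the function \<open>nat \<Rightarrow> real poly\<close> that vanishes from \<open>w\<close> on.\<close>

definition smult_fun :: "real \<Rightarrow> (nat \<Rightarrow> real poly) \<Rightarrow> nat \<Rightarrow> real poly" where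
  "smult_fun c F = (\<lambda>i. smult c (F i))"

interpretation poly_fun: vector_space smult_fun
  by unfold_locales (auto simp: smult_fun_def smult_add_right smult_add_left)

definition fun_of_vec :: "real poly vec \<Rightarrow> nat \<Rightarrow> real poly" where
  "fun_of_vec v = (\<lambda>i. if i < dim_vec v then v $ i else 0)"

lemma sum_fun_apply: "sum f A x = (\<Sum>a\<in>A. f a x)"
  by (induction A rule: infinite_finite_induct) auto

lemma fun_of_vec_add:
  "u \<in> carrier_vec n \<Longrightarrow> v \<in> carrier_vec n \<Longrightarrow> fun_of_vec (u + v) = fun_of_vec u + fun_of_vec v"
  unfolding fun_of_vec_def by (auto simp: fun_eq_iff)

lemma fun_of_vec_const_smult: "fun_of_vec ([:c:] \<cdot>\<^sub>v v) = smult_fun c (fun_of_vec v)"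
  unfolding fun_of_vec_def smult_fun_def by (auto simp: fun_eq_iff)

lemma fun_of_vec_zero [simp]: "fun_of_vec (0\<^sub>v n) = 0"
  unfolding fun_of_vec_def by (auto simp: fun_eq_iff)

lemma fun_of_vec_beyond_dim: "v \<in> carrier_vec n \<Longrightarrow> n \<le> i \<Longrightarrow> fun_of_vec v i = 0"
  unfolding fun_of_vec_def by auto

lemma vec_fun_of_vec: "v \<in> carrier_vec n \<Longrightarrow> vec n (fun_of_vec v) = v"
  unfolding fun_of_vec_def by (intro eq_vecI) auto

lemma fun_of_vec_vec: "(\<forall>i\<ge>n. F i = 0) \<Longrightarrow> fun_of_vec (vec n F) = F"
  unfolding fun_of_vec_def by (auto simp: fun_eq_iff)

definition state_fun_space :: "real poly mat \<Rightarrow> (nat \<Rightarrow> real poly) set" where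
  "state_fun_space R = fun_of_vec ` state_space R"

definition mod_fun :: "real poly mat \<Rightarrow> (nat \<Rightarrow> real poly) \<Rightarrow> nat \<Rightarrow> real poly" where
  "mod_fun R F = fun_of_vec (mod_row (vec (dim_row R) F) R)"

lemma state_fun_space_beyond_dim:
  "R \<in> carrier_mat w w \<Longrightarrow> F \<in> state_fun_space R \<Longrightarrow> w \<le> i \<Longrightarrow> F i = 0"
  unfolding state_fun_space_def using state_space_carrier fun_of_vec_beyond_dim by blast

lemma mod_fun_in_state_fun_space:
  "R \<in> carrier_mat w w \<Longrightarrow> det R \<noteq> 0 \<Longrightarrow> mod_fun R F \<in> state_fun_space R"
  unfolding mod_fun_def state_fun_space_def using mod_row_in_state_space[of R w] by simp

lemma mod_fun_hom:
  assumes R: "R \<in> carrier_mat w w" and det_R: "det R \<noteq> 0"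
  shows "module_hom smult_fun smult_fun (mod_fun R)"
proof unfold_locales
  fix F G :: "nat \<Rightarrow> real poly"
  have "vec (dim_row R) (F + G) = vec w F + vec w G" using R by (intro eq_vecI) auto
  then show "mod_fun R (F + G) = mod_fun R F + mod_fun R G"
    unfolding mod_fun_def using R mod_row_add[OF R det_R, of "vec w F" "vec w G"]
      fun_of_vec_add[OF mod_row_carrier[OF R det_R] mod_row_carrier[OF R det_R]] by simp
next
  fix c and F :: "nat \<Rightarrow> real poly"
  have "vec (dim_row R) (smult_fun c F) = [:c:] \<cdot>\<^sub>v vec w F"
    using R by (intro eq_vecI) (auto simp: smult_fun_def)
  then show "mod_fun R (smult_fun c F) = smult_fun c (mod_fun R F)"
    unfolding mod_fun_def using R mod_row_const_smult[OF R det_R, of "vec w F" c]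
      fun_of_vec_const_smult by simp
qed

section \<open>The dimension of the state space\<close>

definition degree_bounded :: "nat \<Rightarrow> (nat \<Rightarrow> nat) \<Rightarrow> (nat \<Rightarrow> real poly) set" where
  "degree_bounded w d = {F. (\<forall>i. w \<le> i \<longrightarrow> F i = 0) \<and> (\<forall>i<w. F i = 0 \<or> degree (F i) < d i)}"

definition monom_fun :: "nat \<Rightarrow> nat \<Rightarrow> nat \<Rightarrow> real poly" where
  "monom_fun j k = (\<lambda>i. if i = j then monom 1 k else 0)"

definition monom_funs :: "nat \<Rightarrow> (nat \<Rightarrow> nat) \<Rightarrow> (nat \<Rightarrow> real poly) set" where
  "monom_funs w d = (\<lambda>(j,k). monom_fun j k) ` Sigma {0..<w} (\<lambda>j. {0..<d j})"

lemma sum_monom_coeff_less_degree: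
  assumes "p = 0 \<or> degree p < d"
  shows "(\<Sum>k\<in>{0..<d}. monom (coeff p k) k) = p"
proof (rule poly_eqI)
  fix m
  have "coeff (\<Sum>k\<in>{0..<d}. monom (coeff p k) k) m = (if m < d then coeff p m else 0)"
    by (simp add: coeff_sum coeff_monom sum.delta')
  also have "\<dots> = coeff p m" using assms by (auto simp: coeff_eq_0)
  finally show "coeff (\<Sum>k\<in>{0..<d}. monom (coeff p k) k) m = coeff p m" .
qed

lemma card_monom_funs: "card (monom_funs w d) = (\<Sum>j\<in>{0..<w}. d j)"
proof -
  have "inj_on (\<lambda>(j,k). monom_fun j k) (Sigma {0..<w} (\<lambda>j. {0..<d j}))"
  proof (rule inj_onI, clarify)
    fix j k j' k' assume "monom_fun j k = monom_fun j' k'"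
    then have "monom 1 k = (if j = j' then monom 1 k' else (0 :: real poly))"
      unfolding monom_fun_def by (metis (full_types))
    then show "j = j' \<and> k = k'" by (metis monom_eq_iff' one_neq_zero monom_eq_0_iff)
  qed
  then show ?thesis unfolding monom_funs_def by (simp add: card_image card_SigmaI)
qed

lemma degree_bounded_subspace: "poly_fun.subspace (degree_bounded w d)"
proof -
  have "F + G \<in> degree_bounded w d" if F: "F \<in> degree_bounded w d" and G: "G \<in> degree_bounded w d"
    for F G
  proof -
    have "F i + G i = 0 \<or> degree (F i + G i) < d i" if i: "i < w" for i
    proof (cases "F i = 0 \<or> G i = 0")
      case False
      then have "degree (F i) < d i" "degree (G i) < d i"
        using F G i unfolding degree_bounded_def by auto
      then show ?thesis using degree_add_le_max[of "F i" "G i"] by linarith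
    qed (use F G i in \<open>auto simp: degree_bounded_def\<close>)
    then show ?thesis using F G unfolding degree_bounded_def by auto
  qed
  moreover have "smult_fun c F \<in> degree_bounded w d" if F: "F \<in> degree_bounded w d" for c F
  proof -
    have "smult c (F i) = 0 \<or> degree (smult c (F i)) < d i" if "i < w" for i
      using F that degree_smult_le[of c "F i"] unfolding degree_bounded_def by auto
    then show ?thesis using F unfolding degree_bounded_def smult_fun_def by auto
  qed
  ultimately show ?thesis
    unfolding poly_fun.subspace_def by (auto simp: degree_bounded_def)
qed

lemma span_monom_funs: "poly_fun.span (monom_funs w d) = degree_bounded w d"
proof
  have "monom_funs w d \<subseteq> degree_bounded w d"
    unfolding monom_funs_def degree_bounded_def monom_fun_def by (auto simp: degree_monom_eq)
  then show "poly_fun.span (monom_funs w d) \<subseteq> degree_bounded w d"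
    using poly_fun.span_minimal degree_bounded_subspace by blast
next
  let ?P = "Sigma {0..<w} (\<lambda>j. {0..<d j})"
  show "degree_bounded w d \<subseteq> poly_fun.span (monom_funs w d)"
  proof
    fix F assume F: "F \<in> degree_bounded w d"
    have "F = (\<Sum>p\<in>?P. smult_fun (coeff (F (fst p)) (snd p)) (monom_fun (fst p) (snd p)))"
    proof (rule ext)
      fix i
      have "(\<Sum>p\<in>?P. smult_fun (coeff (F (fst p)) (snd p)) (monom_fun (fst p) (snd p))) i
          = (\<Sum>p\<in>?P. smult (coeff (F (fst p)) (snd p)) (monom_fun (fst p) (snd p) i))"
        by (simp add: sum_fun_apply smult_fun_def)
      also have "\<dots> = (\<Sum>(j,k)\<in>?P. if i = j then monom (coeff (F j) k) k else 0)"
        by (rule sum.cong) (auto simp: monom_fun_def smult_monom)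
      also have "\<dots> = (\<Sum>j\<in>{0..<w}. \<Sum>k\<in>{0..<d j}. if i = j then monom (coeff (F j) k) k else 0)"
        by (rule sum.Sigma[symmetric]) auto
      also have "\<dots> = (\<Sum>j\<in>{0..<w}. if i = j then \<Sum>k\<in>{0..<d j}. monom (coeff (F j) k) k else 0)"
        by (rule sum.cong) auto
      also have "\<dots> = F i"
        using F sum_monom_coeff_less_degree[of "F i" "d i"] unfolding degree_bounded_def
        by (simp add: sum.delta')
      finally show "F i = (\<Sum>p\<in>?P. smult_fun (coeff (F (fst p)) (snd p)) (monom_fun (fst p) (snd p))) i"
        by simp
    qed
    also have "\<dots> \<in> poly_fun.span (monom_funs w d)"
      by (intro poly_fun.span_sum poly_fun.span_scale poly_fun.span_base)
        (auto simp: monom_funs_def)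
    finally show "F \<in> poly_fun.span (monom_funs w d)" .
  qed
qed

lemma independent_monom_funs: "poly_fun.independent (monom_funs w d)"
proof
  have fin: "finite (monom_funs w d)" unfolding monom_funs_def by simp
  assume "poly_fun.dependent (monom_funs w d)"
  then obtain u F0 where F0: "F0 \<in> monom_funs w d" "u F0 \<noteq> 0"
    and zero: "(\<Sum>F\<in>monom_funs w d. smult_fun (u F) F) = 0"
    using poly_fun.dependent_finite[OF fin] by blast
  obtain j0 k0 where F0_eq: "F0 = monom_fun j0 k0" using F0 unfolding monom_funs_def by auto
  have coeff_F0: "u F * coeff (F j0) k0 = (if F = F0 then u F else 0)"
    if F_in: "F \<in> monom_funs w d" for F
  proof -
    obtain j k where F: "F = monom_fun j k" using F_in unfolding monom_funs_def by auto
    show ?thesis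
    proof (cases "j = j0 \<and> k = k0")
      case True
      then show ?thesis using F F0_eq by (simp add: monom_fun_def)
    next
      case False
      then have "coeff (F j0) k0 = 0" using F by (auto simp: monom_fun_def coeff_monom)
      moreover have "coeff (F0 j0) k0 = 1" using F0_eq by (simp add: monom_fun_def)
      ultimately show ?thesis by auto
    qed
  qed
  have "0 = coeff ((\<Sum>F\<in>monom_funs w d. smult_fun (u F) F) j0) k0" using zero by simp
  also have "\<dots> = (\<Sum>F\<in>monom_funs w d. u F * coeff (F j0) k0)"
    by (simp add: sum_fun_apply smult_fun_def coeff_sum)
  also have "\<dots> = (\<Sum>F\<in>monom_funs w d. if F = F0 then u F else 0)"
    using coeff_F0 by (rule sum.cong[OF refl])
  also have "\<dots> = u F0" using F0(1) fin by (simp add: sum.delta')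
  finally show False using F0(2) by simp
qed

context
  fixes R T :: "real poly mat" and w :: nat
  assumes R: "R \<in> carrier_mat w w" and det_R: "det R \<noteq> 0"
    and equiv: "row_equivalent w R T" and upper: "upper_triangular T"
begin

private lemma T: "T \<in> carrier_mat w w"
  using equiv row_equivalent_carrier by blast

lemma triangular_diagonal_nonzero: "\<forall>j<w. T $$ (j,j) \<noteq> 0"
  and degree_det_eq_sum_diagonal: "degree (det R) = (\<Sum>j\<in>{0..<w}. degree (T $$ (j,j)))"
proof -
  have det_T: "det T = (\<Prod>j\<in>{0..<w}. T $$ (j,j))"
    using det_upper_triangular[OF upper T] T
    by (simp add: diag_mat_def prod.distinct_set_conv_list[symmetric])
  have "det T = det R \<or> det T = - det R" using equiv unfolding row_equivalent_def by blast
  then have "det T \<noteq> 0" "degree (det R) = degree (det T)" using det_R by auto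
  then show "\<forall>j<w. T $$ (j,j) \<noteq> 0" "degree (det R) = (\<Sum>j\<in>{0..<w}. degree (T $$ (j,j)))"
    unfolding det_T by (auto intro!: degree_prod_eq_sum_degree)
qed

private abbreviation "D \<equiv> degree_bounded w (\<lambda>j. degree (T $$ (j,j)))"

lemma mod_fun_inj_on_degree_bounded: "inj_on (mod_fun R) D"
  unfolding module_hom.inj_on_iff_eq_0[OF mod_fun_hom[OF R det_R] degree_bounded_subspace]
proof (intro ballI impI)
  fix F assume F: "F \<in> D" and mod_F: "mod_fun R F = 0"
  define f where "f = vec w F"
  have f_w: "f \<in> carrier_vec w" unfolding f_def by simp
  have "fun_of_vec (mod_row f R) = 0" using mod_F R unfolding mod_fun_def f_def by simp
  then have "vec w (fun_of_vec (mod_row f R)) = 0\<^sub>v w" by (intro eq_vecI) auto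
  then have "mod_row f R = 0\<^sub>v w" using vec_fun_of_vec[OF mod_row_carrier[OF R det_R f_w]] by simp
  moreover obtain h where h: "h \<in> carrier_vec w" "f = mod_row f R + vec_mat_mult h R"
    using mod_row_decomposition(2)[OF R det_R f_w] by blast
  ultimately have "f = vec_mat_mult h R" using R by simp
  then have "f \<in> row_module R" unfolding row_module_def using h(1) R by auto
  then have "f \<in> row_module T" using equiv unfolding row_equivalent_def by simp
  then obtain h' where h': "h' \<in> carrier_vec w" "f = vec_mat_mult h' T"
    using T unfolding row_module_def by auto
  have "reduced_modulo T (vec_mat_mult h' T)"
    unfolding reduced_modulo_def h'(2)[symmetric] using F unfolding degree_bounded_def f_def by auto
  then have "f = 0\<^sub>v w"
    using reduced_row_module_zero[OF T upper triangular_diagonal_nonzero h'(1)] h'(2)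
      vec_mat_mult_zero[OF T] by simp
  have "F i = 0" for i
  proof (cases "i < w")
    case True
    then have "F i = f $ i" unfolding f_def by simp
    then show ?thesis using \<open>f = 0\<^sub>v w\<close> True by simp
  next
    case False
    then show ?thesis using F unfolding degree_bounded_def by simp
  qed
  then show "F = 0" by (simp add: fun_eq_iff)
qed

lemma state_fun_space_eq_image: "state_fun_space R = mod_fun R ` D"
proof
  show "mod_fun R ` D \<subseteq> state_fun_space R"
    using mod_fun_in_state_fun_space[OF R det_R] by blast
next
  show "state_fun_space R \<subseteq> mod_fun R ` D"
  proof
    fix G assume "G \<in> state_fun_space R"
    then obtain g where g: "g \<in> state_space R" and G: "G = fun_of_vec g"
      unfolding state_fun_space_def by blast
    have g_w: "g \<in> carrier_vec w" using state_space_carrier[OF R g] .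
    obtain h where h: "h \<in> carrier_vec w" and reduced: "reduced_modulo T (g - vec_mat_mult h T)"
      using reduction_exists[OF T upper triangular_diagonal_nonzero g_w] by blast
    have "vec_mat_mult h T \<in> row_module T" unfolding row_module_def using h T by auto
    then have "vec_mat_mult h T \<in> row_module R" using equiv unfolding row_equivalent_def by simp
    then obtain h' where h': "h' \<in> carrier_vec w" "vec_mat_mult h T = vec_mat_mult h' R"
      using R unfolding row_module_def by auto
    define r where "r = g - vec_mat_mult h' R"
    have r_w: "r \<in> carrier_vec w" unfolding r_def using g_w R by simp
    have "r = g - vec_mat_mult h T" unfolding r_def h'(2) ..
    then have "fun_of_vec r \<in> D"
      using reduced fun_of_vec_beyond_dim[OF r_w] r_w
      unfolding degree_bounded_def reduced_modulo_def fun_of_vec_def by auto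
    moreover have "mod_row r R = g"
      unfolding r_def
      using mod_row_diff_row_module[OF R det_R g_w h'(1)] mod_row_state_space[OF R det_R g]
      by simp
    then have "mod_fun R (fun_of_vec r) = G"
      unfolding mod_fun_def G using R vec_fun_of_vec[OF r_w] by simp
    ultimately show "G \<in> mod_fun R ` D" by blast
  qed
qed

end

lemma state_fun_space_basis:
  assumes R: "R \<in> carrier_mat w w" and det_R: "det R \<noteq> 0"
  shows "\<exists>B. finite B \<and> card B = degree (det R) \<and> poly_fun.independent B \<and>
    B \<subseteq> state_fun_space R \<and> state_fun_space R \<subseteq> poly_fun.span B"
proof -
  obtain T where equiv: "row_equivalent w R T" and upper: "upper_triangular T"
    using row_equivalent_upper_triangular[OF R] by blast
  define d where "d = (\<lambda>j. degree (T $$ (j,j)))"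
  define E where "E = monom_funs w d"
  have hom: "module_hom smult_fun smult_fun (mod_fun R)" using mod_fun_hom[OF R det_R] .
  have span_E: "poly_fun.span E = degree_bounded w d" unfolding E_def by (rule span_monom_funs)
  have inj: "inj_on (mod_fun R) (poly_fun.span E)"
    unfolding span_E d_def by (rule mod_fun_inj_on_degree_bounded[OF R det_R equiv upper])
  have image: "state_fun_space R = mod_fun R ` poly_fun.span E"
    unfolding span_E d_def by (rule state_fun_space_eq_image[OF R det_R equiv upper])
  have "finite (mod_fun R ` E)" unfolding E_def monom_funs_def by simp
  moreover have "card (mod_fun R ` E) = degree (det R)"
    using card_image[OF inj_on_subset[OF inj poly_fun.span_superset]] card_monom_funs[of w d]
      degree_det_eq_sum_diagonal[OF R det_R equiv upper] unfolding E_def d_def by simp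
  moreover have "poly_fun.independent (mod_fun R ` E)"
    using module_hom.independent_injective_image[OF hom _ inj] independent_monom_funs
    unfolding E_def by blast
  moreover have "mod_fun R ` E \<subseteq> state_fun_space R"
    unfolding image using poly_fun.span_superset by blast
  moreover have "state_fun_space R \<subseteq> poly_fun.span (mod_fun R ` E)"
    unfolding image module_hom.span_image[OF hom] ..
  ultimately show ?thesis by blast
qed

context vector_space
begin

lemma extend_independent_to_basis_card:
  assumes C: "finite C" "independent C" "C \<subseteq> V" "V \<subseteq> span C"
    and B: "B \<subseteq> V" "independent B"
  shows "\<exists>B'. B \<subseteq> B' \<and> B' \<subseteq> V \<and> independent B' \<and> V \<subseteq> span B' \<and> finite B' \<and> card B' = card C"
proof -
  obtain B' where B': "B \<subseteq> B'" "B' \<subseteq> V" "independent B'" "V \<subseteq> span B'"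
    using maximal_independent_subset_extend[OF B] by blast
  have "finite B'" "card B' \<le> card C"
    using independent_span_bound[OF C(1) B'(3)] B'(2) C(4) by auto
  moreover have "card C \<le> card B'"
    using independent_span_bound[OF \<open>finite B'\<close> C(2)] C(3) B'(4) by auto
  ultimately show ?thesis using B' by (intro exI[of _ B']) auto
qed

end

definition basis_list :: "(nat \<Rightarrow> real poly) list \<Rightarrow> (nat \<Rightarrow> real poly) set \<Rightarrow> bool" where
  "basis_list Fs V \<longleftrightarrow>
     distinct Fs \<and> set Fs \<subseteq> V \<and> poly_fun.independent (set Fs) \<and> V \<subseteq> poly_fun.span (set Fs)"

definition mat_of_funs :: "nat \<Rightarrow> (nat \<Rightarrow> real poly) list \<Rightarrow> real poly mat" where
  "mat_of_funs w Fs = mat (length Fs) w (\<lambda>(i,j). (Fs ! i) j)"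

lemma mat_of_funs_carrier: "mat_of_funs w Fs \<in> carrier_mat (length Fs) w"
  unfolding mat_of_funs_def by simp

lemma mat_of_funs_append: "mat_of_funs w (Fs @ Gs) = mat_of_funs w Fs @\<^sub>r mat_of_funs w Gs"
  unfolding mat_of_funs_def append_rows_def by (intro eq_matI) (auto simp: nth_append)

lemma row_comb_mat_of_funs:
  "row_comb c (mat_of_funs w Fs) = vec w (\<Sum>i<length Fs. smult_fun (c i) (Fs ! i))"
  unfolding row_comb_def mat_of_funs_def
  by (intro eq_vecI) (auto simp: sum_fun_apply smult_fun_def intro!: sum.cong)

lemma sum_nth_distinct:
  "distinct xs \<Longrightarrow> (\<Sum>i<length xs. g (xs ! i)) = (\<Sum>x\<in>set xs. g x)"
  using sum.reindex_bij_betw[OF bij_betw_nth[OF _ refl refl], of xs g] by simp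

lemma minimal_state_map_mat_of_funs:
  assumes R: "R \<in> carrier_mat w w" and basis: "basis_list Fs (state_fun_space R)"
  shows "minimal_state_map (mat_of_funs w Fs) R"
  unfolding minimal_state_map_def rows_basis_of_def
proof (intro conjI allI impI ballI)
  let ?X = "mat_of_funs w Fs"
  have distinct: "distinct Fs" and sub: "set Fs \<subseteq> state_fun_space R"
    and indep: "poly_fun.independent (set Fs)" and span: "state_fun_space R \<subseteq> poly_fun.span (set Fs)"
    using basis unfolding basis_list_def by auto
  have Fs_beyond_dim: "\<forall>i<length Fs. \<forall>j\<ge>w. (Fs ! i) j = 0"
    using sub state_fun_space_beyond_dim[OF R] nth_mem by blast
  show "dim_col ?X = dim_row R" using R unfolding mat_of_funs_def by simp
  show "row ?X i \<in> state_space R" if "i < dim_row ?X" for i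
  proof -
    have i: "i < length Fs" using that unfolding mat_of_funs_def by simp
    then obtain g where g: "g \<in> state_space R" "Fs ! i = fun_of_vec g"
      using sub unfolding state_fun_space_def by (meson nth_mem subsetD imageE)
    have "row ?X i = vec w (Fs ! i)" using i unfolding mat_of_funs_def by simp
    also have "\<dots> = g" using g vec_fun_of_vec state_space_carrier[OF R] by simp
    finally show ?thesis using g by simp
  qed
  show "c i = 0" if zero: "row_comb c ?X = 0\<^sub>v (dim_col ?X)" and i: "i < dim_row ?X" for c i
  proof -
    let ?S = "\<Sum>i<length Fs. smult_fun (c i) (Fs ! i)"
    have "\<forall>j\<ge>w. ?S j = 0"
      using Fs_beyond_dim by (auto simp: sum_fun_apply smult_fun_def intro!: sum.neutral)
    then have "?S = fun_of_vec (vec w ?S)" by (rule fun_of_vec_vec[symmetric])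
    also have "vec w ?S = 0\<^sub>v w"
      using zero row_comb_mat_of_funs unfolding mat_of_funs_def by simp
    finally have "?S = 0" by (simp only: fun_of_vec_zero)
    define u where "u F = c (SOME i. i < length Fs \<and> Fs ! i = F)" for F
    have u_nth: "u (Fs ! i) = c i" if "i < length Fs" for i
    proof -
      have "(SOME j. j < length Fs \<and> Fs ! j = Fs ! i) = i"
        using that distinct by (intro some_equality) (auto simp: nth_eq_iff_index_eq)
      then show ?thesis unfolding u_def by simp
    qed
    have "(\<Sum>F\<in>set Fs. smult_fun (u F) F) = 0"
      using \<open>?S = 0\<close> u_nth sum_nth_distinct[OF distinct, of "\<lambda>F. smult_fun (u F) F"] by simp
    then have "\<forall>F\<in>set Fs. u F = 0" using indep poly_fun.dependent_finite[of "set Fs"] by auto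
    moreover have "i < length Fs" using i unfolding mat_of_funs_def by simp
    ultimately show "c i = 0" using u_nth nth_mem by metis
  qed
  show "\<exists>c. f = row_comb c ?X" if f: "f \<in> state_space R" for f
  proof -
    have "fun_of_vec f \<in> poly_fun.span (set Fs)"
      using f span unfolding state_fun_space_def by blast
    then obtain u where u: "fun_of_vec f = (\<Sum>F\<in>set Fs. smult_fun (u F) F)"
      using poly_fun.span_finite[of "set Fs"] by auto
    have "f = vec w (fun_of_vec f)" using vec_fun_of_vec state_space_carrier[OF R f] by simp
    also have "\<dots> = vec w (\<Sum>i<length Fs. smult_fun (u (Fs ! i)) (Fs ! i))"
      using u sum_nth_distinct[OF distinct, of "\<lambda>F. smult_fun (u F) F"] by simp
    also have "\<dots> = row_comb (\<lambda>i. u (Fs ! i)) ?X" using row_comb_mat_of_funs by simp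
    finally show ?thesis by blast
  qed
qed

lemma nested_basis_lists:
  assumes R1: "R1 \<in> carrier_mat w w" "det R1 \<noteq> 0" and R2: "R2 \<in> carrier_mat w w" "det R2 \<noteq> 0"
    and subset: "state_fun_space R2 \<subseteq> state_fun_space R1"
  shows "\<exists>Fs Gs. length Fs = degree (det R2) \<and> length Gs = degree (det R1) - degree (det R2) \<and>
    basis_list Fs (state_fun_space R2) \<and> basis_list (Fs @ Gs) (state_fun_space R1)"
proof -
  obtain B2 where B2: "finite B2" "card B2 = degree (det R2)" "poly_fun.independent B2"
      "B2 \<subseteq> state_fun_space R2" "state_fun_space R2 \<subseteq> poly_fun.span B2"
    using state_fun_space_basis[OF R2] by blast
  obtain C1 where C1: "finite C1" "card C1 = degree (det R1)" "poly_fun.independent C1"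
      "C1 \<subseteq> state_fun_space R1" "state_fun_space R1 \<subseteq> poly_fun.span C1"
    using state_fun_space_basis[OF R1] by blast
  have "B2 \<subseteq> state_fun_space R1" using B2(4) subset by blast
  then obtain B1 where B1: "B2 \<subseteq> B1" "B1 \<subseteq> state_fun_space R1" "poly_fun.independent B1"
      "state_fun_space R1 \<subseteq> poly_fun.span B1" "finite B1" "card B1 = degree (det R1)"
    using poly_fun.extend_independent_to_basis_card[OF C1(1,3-5) _ B2(3)] C1(2) by auto
  obtain Fs where Fs: "distinct Fs" "set Fs = B2" using finite_distinct_list[OF B2(1)] by blast
  obtain Gs where Gs: "distinct Gs" "set Gs = B1 - B2" using finite_distinct_list B1(5) by blast
  have "length Fs = degree (det R2)" using Fs B2(2) distinct_card by metis
  moreover have "length Gs = degree (det R1) - degree (det R2)"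
    using Gs card_Diff_subset[OF B2(1) B1(1)] B1(6) B2(2) distinct_card by metis
  moreover have "basis_list Fs (state_fun_space R2)" using Fs B2 unfolding basis_list_def by simp
  moreover have "basis_list (Fs @ Gs) (state_fun_space R1)"
    using Fs Gs B1 unfolding basis_list_def by (auto simp: Un_absorb1)
  ultimately show ?thesis by blast
qed

lemma mod_mat_eq_const_mult:
  assumes R: "R \<in> carrier_mat w w" and det_R: "det R \<noteq> 0"
    and X0: "minimal_state_map X0 R" and X: "X \<in> carrier_mat m w"
  shows "\<exists>P. P \<in> carrier_mat m (dim_row X0) \<and> mod_mat X R = const_mat P * X0"
proof -
  have X0_w: "dim_col X0 = w" using X0 R unfolding minimal_state_map_def by simp
  have "\<forall>i. \<exists>c. i < m \<longrightarrow> mod_row (row X i) R = row_comb c X0"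
    using mod_row_in_state_space[OF R det_R] X X0 unfolding minimal_state_map_def rows_basis_of_def
    by (metis carrier_matD(2) row_carrier)
  then obtain c where c: "\<And>i. i < m \<Longrightarrow> mod_row (row X i) R = row_comb (c i) X0" by metis
  define P where "P = mat m (dim_row X0) (\<lambda>(i,l). c i l)"
  have "mod_mat X R = const_mat P * X0"
  proof (rule eq_matI)
    fix i j assume "i < dim_row (const_mat P * X0)" "j < dim_col (const_mat P * X0)"
    then have i: "i < m" and j: "j < w" unfolding P_def const_mat_def using X0_w by auto
    have "mod_mat X R $$ (i,j) = row_comb (c i) X0 $ j"
      unfolding mod_mat_def using i j X c by simp
    also have "\<dots> = (const_mat P * X0) $$ (i,j)"
      using i j X0_w unfolding P_def const_mat_def row_comb_def
      by (auto simp: scalar_prod_def atLeast0LessThan intro!: sum.cong)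
    finally show "mod_mat X R $$ (i,j) = (const_mat P * X0) $$ (i,j)" .
  qed (use X X0_w in \<open>auto simp: mod_mat_def P_def const_mat_def\<close>)
  moreover have "P \<in> carrier_mat m (dim_row X0)" unfolding P_def by simp
  ultimately show ?thesis by blast
qed

theorem lemma1:
  fixes R1 R2 :: "real poly mat" and w :: nat
  assumes "0 < w" and "R1 \<in> carrier_mat w w" and "R2 \<in> carrier_mat w w"
    and "nonsingular R1" and "nonsingular R2"
    and "strictly_proper_mat (lift_mat R2 * rat_inverse R1)"
  shows "degree (det R2) < degree (det R1) \<and>
    (\<exists>X1' X2. X1' \<in> carrier_mat (degree (det R1) - degree (det R2)) w \<and>
              X2 \<in> carrier_mat (degree (det R2)) w \<and>
              minimal_state_map X2 R2 \<and>
              minimal_state_map (X2 @\<^sub>r X1') R1 \<and>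
              (\<exists>Pm. Pm \<in> carrier_mat (degree (det R1) - degree (det R2)) (degree (det R2)) \<and>
                   mod_mat X1' R2 = const_mat Pm * X2))"
proof -
  note w = assms(1) and R1 = assms(2) and R2 = assms(3) and sp = assms(6)
  have d1: "det R1 \<noteq> 0" and d2: "det R2 \<noteq> 0" using assms(4,5) unfolding nonsingular_def by auto
  have "state_fun_space R2 \<subseteq> state_fun_space R1"
    using state_space_subset[OF R1 d1 R2 d2 sp] unfolding state_fun_space_def by blast
  then obtain Fs Gs where len: "length Fs = degree (det R2)"
      "length Gs = degree (det R1) - degree (det R2)"
    and Fs: "basis_list Fs (state_fun_space R2)"
    and Fs_Gs: "basis_list (Fs @ Gs) (state_fun_space R1)"
    using nested_basis_lists[OF R1 d1 R2 d2] by blast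
  define X2 where "X2 = mat_of_funs w Fs"
  define X1' where "X1' = mat_of_funs w Gs"
  have X2: "X2 \<in> carrier_mat (degree (det R2)) w"
    and X1': "X1' \<in> carrier_mat (degree (det R1) - degree (det R2)) w"
    unfolding X1'_def X2_def using mat_of_funs_carrier len by metis+
  have min2: "minimal_state_map X2 R2"
    unfolding X2_def using minimal_state_map_mat_of_funs[OF R2 Fs] .
  moreover have "minimal_state_map (X2 @\<^sub>r X1') R1"
    unfolding X2_def X1'_def mat_of_funs_append[symmetric]
    using minimal_state_map_mat_of_funs[OF R1 Fs_Gs] .
  moreover obtain Pm where "Pm \<in> carrier_mat (degree (det R1) - degree (det R2)) (dim_row X2)"
    and "mod_mat X1' R2 = const_mat Pm * X2"
    using mod_mat_eq_const_mult[OF R2 d2 min2 X1'] by blast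
  ultimately show ?thesis using degree_det_less[OF R1 d1 R2 d2 w sp] X1' X2 by auto
qed

end
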